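(* Let $d\ge1$, $z>0$, let $G$ satisfy condition (A) and let $Z$ be a $G$-$\mathrm{BESQ}^d_z$. For $b>z$ let $\tau_b=\inf\{t\ge0: Z_t\ge b\}$. Then for each fixed $b>z$, $\lim_{t\uparrow\infty}\mathrm{c}(\{\tau_b>t\})=0$. Moreover, for each $t\ge0$, $\lim_{b\uparrow\infty}\mathrm{c}(\{\tau_b<t\})=0$.
   Context: Framework: $\Omega=C_0(\mathbb{R}^+;\mathbb{R}^d)$ with canonical process $B$, a $d$-dimensional $G$-Brownian motion under the $G$-expectation $\hat{\mathbb{E}}$ for monotone sublinear $G:\mathbb{S}_d\to\mathbb{R}$. There is a weakly compact family $\mathcal{P}$ of probability measures with $\hat{\mathbb{E}}[\xi]=\sup_{P\in\mathcal{P}}E_P[\xi]$; capacity $\mathrm{c}(A)=\sup_{P\in\mathcal{P}}P(A)$. Condition (A): $G(A)=G'(\mathrm{tr}[A])$ with $G'(a)=\frac12(\bar\sigma^2a^+-\underline{\sigma}^2a^-)$, $0<\underline{\sigma}\le\bar\sigma<\infty$. For $x\in\mathbb{R}^d$, $Z_t=|B_t+x|^2$ is the squared $G$-Bessel process of dimension $d$ started at $z=|x|^2$ ($G$-$\mathrm{BESQ}^d_z$). *)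

theory Defs
  imports "HOL-Probability.Probability"
begin

text \<open>Paths are represented as functions on the whole real line
  that vanish for negative times, so Omega is in bijection with C_0([0,oo); R^d).
  The canonical process is B_t(w) = w t.\<close>

definition Omega :: "(real \<Rightarrow> 'a::real_normed_vector) set" where
  "Omega = {w. continuous_on {0..} w \<and> w 0 = 0 \<and> (\<forall>t<0. w t = 0)}"

text \<open>The sigma-algebra generated by the coordinate maps (= Borel sets of the
  topology of locally uniform convergence).\<close>
definition Wiener :: "(real \<Rightarrow> 'a::euclidean_space) measure" where
  "Wiener = sigma Omega {{w \<in> Omega. w t \<in> A} | t A. 0 \<le> t \<and> A \<in> sets borel}"

definition lu_conv :: "(nat \<Rightarrow> real \<Rightarrow> 'a::real_normed_vector) \<Rightarrow> (real \<Rightarrow> 'a) \<Rightarrow> bool" where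
  "lu_conv ws w \<longleftrightarrow> (\<forall>T e. 0 < e \<longrightarrow>
     eventually (\<lambda>n. \<forall>t\<in>{0..T}. dist (ws n t) (w t) < e) sequentially)"

text \<open>Bounded continuous functionals on Omega (the topology is metrizable, so
  sequential continuity is continuity).\<close>
definition bcont_fun :: "((real \<Rightarrow> 'a::real_normed_vector) \<Rightarrow> real) \<Rightarrow> bool" where
  "bcont_fun f \<longleftrightarrow> (\<exists>K. \<forall>w\<in>Omega. \<bar>f w\<bar> \<le> K) \<and>
     (\<forall>ws w. (\<forall>n. ws n \<in> Omega) \<longrightarrow> w \<in> Omega \<longrightarrow> lu_conv ws w \<longrightarrow>
        (\<lambda>n. f (ws n)) \<longlonglongrightarrow> f w)"

definition weak_conv_paths :: "(nat \<Rightarrow> (real \<Rightarrow> 'a::euclidean_space) measure) \<Rightarrow> (real \<Rightarrow> 'a) measure \<Rightarrow> bool" where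
  "weak_conv_paths Ps P \<longleftrightarrow> (\<forall>f :: (real \<Rightarrow> 'a) \<Rightarrow> real. bcont_fun f \<longrightarrow>
     (\<lambda>n. integral\<^sup>L (Ps n) f) \<longlonglongrightarrow> integral\<^sup>L P f)"

text \<open>Weak compactness (sequential form; the weak topology on probability measures
  on the Polish space Omega is metrizable).\<close>
definition weakly_compact :: "(real \<Rightarrow> 'a::euclidean_space) measure set \<Rightarrow> bool" where
  "weakly_compact \<P> \<longleftrightarrow> (\<forall>Ps :: nat \<Rightarrow> (real \<Rightarrow> 'a) measure. (\<forall>n. Ps n \<in> \<P>) \<longrightarrow>
     (\<exists>(r :: nat \<Rightarrow> nat) P. strict_mono r \<and> P \<in> \<P> \<and> weak_conv_paths (Ps \<circ> r) P))"

definition upE :: "(real \<Rightarrow> 'a) measure set \<Rightarrow> ((real \<Rightarrow> 'a) \<Rightarrow> real) \<Rightarrow> real" where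
  "upE \<P> \<xi> = (SUP P\<in>\<P>. integral\<^sup>L P \<xi>)"

definition cap :: "(real \<Rightarrow> 'a) measure set \<Rightarrow> (real \<Rightarrow> 'a) set \<Rightarrow> real" where
  "cap \<P> A = (SUP P\<in>\<P>. measure P A)"

text \<open>A point of (R^d)^n x R^d is encoded as (x, y) with x :: nat => 'a, only x 0, ..., x (n-1)
  being relevant.\<close>
definition nrm :: "nat \<Rightarrow> (nat \<Rightarrow> 'a::real_normed_vector) \<Rightarrow> 'a \<Rightarrow> real" where
  "nrm n x y = (\<Sum>i<n. norm (x i)) + norm y"

definition lip_poly :: "nat \<Rightarrow> ((nat \<Rightarrow> 'a::real_normed_vector) \<Rightarrow> 'a \<Rightarrow> real) \<Rightarrow> bool" where
  "lip_poly n \<phi> \<longleftrightarrow> (\<exists>C (m::nat). \<forall>x x' y y'.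
     \<bar>\<phi> x y - \<phi> x' y'\<bar> \<le> C * (1 + nrm n x y ^ m + nrm n x' y' ^ m) * nrm n (x - x') (y - y'))"

definition lip_poly1 :: "('a::real_normed_vector \<Rightarrow> real) \<Rightarrow> bool" where
  "lip_poly1 \<phi> \<longleftrightarrow> (\<exists>C (m::nat). \<forall>y y'.
     \<bar>\<phi> y - \<phi> y'\<bar> \<le> C * (1 + norm y ^ m + norm y' ^ m) * norm (y - y'))"

definition cyl :: "nat \<Rightarrow> (nat \<Rightarrow> real) \<Rightarrow> (real \<Rightarrow> 'a::zero) \<Rightarrow> nat \<Rightarrow> 'a" where
  "cyl n ts w = (\<lambda>i. if i < n then w (ts i) else 0)"

definition G_BM :: "(real \<Rightarrow> 'a::euclidean_space) measure set \<Rightarrow> bool" where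
  "G_BM \<P> \<longleftrightarrow>
     \<comment> \<open>finiteness of all moments (so that the upper expectation is defined on C_{l,Lip} cylinders)\<close>
     (\<forall>t\<ge>0. \<forall>p::nat. (\<forall>P\<in>\<P>. integrable P (\<lambda>w. norm (w t) ^ p)) \<and>
        bdd_above ((\<lambda>P. integral\<^sup>L P (\<lambda>w. norm (w t) ^ p)) ` \<P>)) \<and>
     \<comment> \<open>stationarity of increments\<close>
     (\<forall>t\<ge>0. \<forall>s\<ge>0. \<forall>\<phi>. lip_poly1 \<phi> \<longrightarrow>
        upE \<P> (\<lambda>w. \<phi> (w (t + s) - w t)) = upE \<P> (\<lambda>w. \<phi> (w s))) \<and>
     \<comment> \<open>independence of increments\<close>
     (\<forall>t\<ge>0. \<forall>s\<ge>0. \<forall>n ts \<phi>. (\<forall>i<n. 0 \<le> ts i \<and> ts i \<le> t) \<longrightarrow> lip_poly n \<phi> \<longrightarrow>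
        upE \<P> (\<lambda>w. \<phi> (cyl n ts w) (w (t + s) - w t)) =
        upE \<P> (\<lambda>w. upE \<P> (\<lambda>w'. \<phi> (cyl n ts w) (w' (t + s) - w' t)))) \<and>
     \<comment> \<open>zero mean\<close>
     (\<forall>t\<ge>0. \<forall>a. upE \<P> (\<lambda>w. a \<bullet> w t) = 0 \<and> upE \<P> (\<lambda>w. - (a \<bullet> w t)) = 0) \<and>
     \<comment> \<open>third moment condition\<close>
     ((\<lambda>t. upE \<P> (\<lambda>w. norm (w t) ^ 3) / t) \<longlongrightarrow> 0) (at_right 0)"

definition Gfun :: "(real \<Rightarrow> real^'d) measure set \<Rightarrow> real^'d^'d \<Rightarrow> real" where
  "Gfun \<P> A = upE \<P> (\<lambda>w. (A *v w 1) \<bullet> w 1) / 2"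

definition G' :: "real \<Rightarrow> real \<Rightarrow> real \<Rightarrow> real" where
  "G' sl sh a = (sh\<^sup>2 * max a 0 - sl\<^sup>2 * max (- a) 0) / 2"

definition condA :: "(real \<Rightarrow> real^'d) measure set \<Rightarrow> real \<Rightarrow> real \<Rightarrow> bool" where
  "condA \<P> sl sh \<longleftrightarrow> 0 < sl \<and> sl \<le> sh \<and>
     (\<forall>A::real^'d^'d. transpose A = A \<longrightarrow> Gfun \<P> A = G' sl sh (trace A))"

text \<open>Standing framework: P is a nonempty weakly compact family of probability measures on
  Omega whose upper expectation is the G-expectation, i.e. under which the canonical process
  is a G-Brownian motion, with G satisfying condition (A).\<close>
definition G_framework :: "(real \<Rightarrow> real^'d) measure set \<Rightarrow> real \<Rightarrow> real \<Rightarrow> bool" where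
  "G_framework \<P> sl sh \<longleftrightarrow> \<P> \<noteq> {} \<and>
     (\<forall>P\<in>\<P>. prob_space P \<and> sets P = sets Wiener \<and> space P = Omega) \<and>
     weakly_compact \<P> \<and> G_BM \<P> \<and> condA \<P> sl sh"

definition BESQ :: "real^'d \<Rightarrow> real \<Rightarrow> (real \<Rightarrow> real^'d) \<Rightarrow> real" where
  "BESQ x t w = (norm (w t + x))\<^sup>2"

definition hit_time :: "real^'d \<Rightarrow> real \<Rightarrow> (real \<Rightarrow> real^'d) \<Rightarrow> ereal" where
  "hit_time x b w = Inf {ereal t | t. 0 \<le> t \<and> BESQ x t w \<ge> b}"

end

theory Submission
  imports Defs
begin

text \<open>
  Hitting late: choose a mesh T so large that the second moment of B_T, which is at least
  T sl^2 d by condition (A), dominates the squared radius of the ball of radius sqrt b + 1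
  around -x. A second/fourth moment estimate then bounds the expectation of a Lipschitz cutoff
  of that ball at c + B_T by some q < 1, uniformly in c and in P. On the event that Z stays
  below b up to time m T, the product of the cutoffs at x + B_T, ..., x + B_{mT} equals 1, and
  independence and stationarity of the increments bound its upper expectation by q^m.

  Hitting early: tau_b < t forces the running maximum of |B| on [0, t] above sqrt b - |x|.
  If the capacities of these events did not vanish as b grows, weak compactness of the family
  would produce one P in it under which the continuous cutoffs min 1 (max 0 (sup |B| - L)) have
  expectation at least e/2 for every L, contradicting dominated convergence under P.
\<close>

lemma upE_least:
  assumes "\<P> \<noteq> {}" "\<And>P. P \<in> \<P> \<Longrightarrow> integral\<^sup>L P f \<le> c"
  shows "upE \<P> f \<le> c"
  unfolding upE_def using assms by (intro cSUP_least) auto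

lemma integral_le_upE:
  assumes "P \<in> \<P>" "\<And>Q. Q \<in> \<P> \<Longrightarrow> integral\<^sup>L Q f \<le> c"
  shows "integral\<^sup>L P f \<le> upE \<P> f"
  unfolding upE_def using assms by (intro cSUP_upper) (auto intro!: bdd_aboveI2[where M=c])

lemma upE_add_const:
  assumes ne: "\<P> \<noteq> {}"
    and shift: "\<And>P. P \<in> \<P> \<Longrightarrow> integral\<^sup>L P f = integral\<^sup>L P g + k"
    and bdd: "\<And>P. P \<in> \<P> \<Longrightarrow> integral\<^sup>L P g \<le> c"
  shows "upE \<P> f = upE \<P> g + k"
proof (rule antisym)
  show "upE \<P> f \<le> upE \<P> g + k"
    using integral_le_upE[of _ \<P> g c] bdd shift by (intro upE_least[OF ne]) fastforce
  have "upE \<P> g \<le> upE \<P> f - k"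
    using integral_le_upE[of _ \<P> f "c + k"] bdd shift by (intro upE_least[OF ne]) fastforce
  then show "upE \<P> g + k \<le> upE \<P> f" by simp
qed

lemma space_Wiener: "space Wiener = Omega"
  unfolding Wiener_def by (rule space_measure_of) auto

lemma coordinate_measurable_Wiener:
  assumes "0 \<le> s"
  shows "(\<lambda>w::real \<Rightarrow> 'a::euclidean_space. w s) \<in> borel_measurable Wiener"
proof (rule measurableI)
  fix A :: "'a set" assume A: "A \<in> sets borel"
  have "(\<lambda>w. w s) -` A \<inter> space Wiener = {w \<in> Omega. w s \<in> A}"
    by (auto simp: space_Wiener)
  also have "\<dots> \<in> sets Wiener"
    unfolding Wiener_def using A assms by (subst sets_measure_of) auto
  finally show "(\<lambda>w. w s) -` A \<inter> space Wiener \<in> sets Wiener" .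
qed auto

lemma measure_le_integral_of_ge_1:
  fixes f :: "'a \<Rightarrow> real"
  assumes "integrable M f" "A \<subseteq> space M"
    and "\<And>w. w \<in> A \<Longrightarrow> 1 \<le> f w" "\<And>w. w \<in> space M \<Longrightarrow> 0 \<le> f w"
  shows "measure M A \<le> integral\<^sup>L M f"
proof -
  have "measure M A = integral\<^sup>L M (indicator A)"
    using assms(2) by (simp add: Int_absorb2)
  also have "\<dots> \<le> integral\<^sup>L M f"
    using assms by (intro integral_mono') (auto split: split_indicator)
  finally show ?thesis .
qed

lemma integrable_norm_sq_diff:
  fixes X Y :: "'a \<Rightarrow> 'b::euclidean_space"
  assumes "X \<in> borel_measurable M" "Y \<in> borel_measurable M"
    and "integrable M (\<lambda>w. (norm (X w))\<^sup>2)" "integrable M (\<lambda>w. (norm (Y w))\<^sup>2)"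
  shows "integrable M (\<lambda>w. (norm (X w - Y w))\<^sup>2)"
proof (rule Bochner_Integration.integrable_bound)
  show "integrable M (\<lambda>w. 2 * (norm (X w))\<^sup>2 + 2 * (norm (Y w))\<^sup>2)"
    using assms by simp
  show "AE w in M. norm ((norm (X w - Y w))\<^sup>2) \<le> norm (2 * (norm (X w))\<^sup>2 + 2 * (norm (Y w))\<^sup>2)"
  proof (intro AE_I2)
    fix w
    have "(norm (X w - Y w))\<^sup>2 \<le> (norm (X w) + norm (Y w))\<^sup>2"
      by (intro power_mono norm_triangle_ineq4) auto
    also have "\<dots> \<le> 2 * (norm (X w))\<^sup>2 + 2 * (norm (Y w))\<^sup>2"
      by (smt (verit) sum_squares_bound power2_sum)
    finally show "norm ((norm (X w - Y w))\<^sup>2) \<le> norm (2 * (norm (X w))\<^sup>2 + 2 * (norm (Y w))\<^sup>2)"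
      by simp
  qed
qed (use assms in measurable)

lemma (in prob_space) expectation_norm_sq_add_centered:
  fixes X :: "'a \<Rightarrow> 'b::real_inner"
  assumes "integrable M (\<lambda>w. (norm (X w))\<^sup>2)" "integrable M (\<lambda>w. c \<bullet> X w)"
    and "expectation (\<lambda>w. c \<bullet> X w) = 0"
  shows "expectation (\<lambda>w. (norm (c + X w))\<^sup>2) = (norm c)\<^sup>2 + expectation (\<lambda>w. (norm (X w))\<^sup>2)"
proof -
  have "(norm (c + X w))\<^sup>2 = (norm c)\<^sup>2 + 2 * (c \<bullet> X w) + (norm (X w))\<^sup>2" for w
    by (simp add: power2_norm_eq_inner inner_commute algebra_simps)
  then show ?thesis
    using assms by (simp add: prob_space)
qed

lemma abs_norm_sq_diff_le: "\<bar>(norm u)\<^sup>2 - (norm v)\<^sup>2\<bar> \<le> norm (u - v) * (norm u + norm v)"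
proof -
  have "(norm u)\<^sup>2 - (norm v)\<^sup>2 = (norm u - norm v) * (norm u + norm v)"
    by (simp add: power2_eq_square algebra_simps)
  then have "\<bar>(norm u)\<^sup>2 - (norm v)\<^sup>2\<bar> = \<bar>norm u - norm v\<bar> * (norm u + norm v)"
    by (simp add: abs_mult)
  also have "\<dots> \<le> norm (u - v) * (norm u + norm v)"
    by (intro mult_right_mono norm_triangle_ineq3) auto
  finally show ?thesis .
qed

lemma nrm_nonneg: "0 \<le> nrm n x y"
  unfolding nrm_def by (intro add_nonneg_nonneg sum_nonneg) auto

lemma lip_poly1_neg_norm_sq: "lip_poly1 (\<lambda>y::'a::real_normed_vector. - (norm y)\<^sup>2)"
  unfolding lip_poly1_def
proof (intro exI allI)
  fix y y' :: 'a
  have "\<bar>- (norm y)\<^sup>2 - - (norm y')\<^sup>2\<bar> \<le> norm (y - y') * (norm y + norm y')"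
    using abs_norm_sq_diff_le[of y y'] by simp
  also have "\<dots> \<le> 1 * (1 + norm y ^ 1 + norm y' ^ 1) * norm (y - y')"
    by (simp add: algebra_simps)
  finally show "\<bar>- (norm y)\<^sup>2 - - (norm y')\<^sup>2\<bar> \<le> 1 * (1 + norm y ^ 1 + norm y' ^ 1) * norm (y - y')" .
qed

lemma lip_poly_neg_norm_sq_add: "lip_poly 1 (\<lambda>x (y::'a::real_normed_vector). - (norm (x 0 + y))\<^sup>2)"
  unfolding lip_poly_def
proof (intro exI allI)
  fix x x' :: "nat \<Rightarrow> 'a" and y y' :: 'a
  have nrm1: "nrm 1 x y = norm (x 0) + norm y" for x :: "nat \<Rightarrow> 'a" and y
    by (simp add: nrm_def)
  have "norm (x 0 + y - (x' 0 + y')) \<le> nrm 1 (x - x') (y - y')"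
    unfolding nrm1 by (metis add_diff_add fun_diff_def norm_triangle_ineq)
  moreover have "norm (x 0 + y) + norm (x' 0 + y') \<le> 1 + nrm 1 x y ^ 1 + nrm 1 x' y' ^ 1"
    unfolding nrm1 using norm_triangle_ineq[of "x 0" y] norm_triangle_ineq[of "x' 0" y'] by simp
  ultimately have "norm (x 0 + y - (x' 0 + y')) * (norm (x 0 + y) + norm (x' 0 + y'))
      \<le> nrm 1 (x - x') (y - y') * (1 + nrm 1 x y ^ 1 + nrm 1 x' y' ^ 1)"
    by (intro mult_mono) (auto simp: nrm_nonneg)
  with abs_norm_sq_diff_le[of "x 0 + y" "x' 0 + y'"]
  show "\<bar>- (norm (x 0 + y))\<^sup>2 - - (norm (x' 0 + y'))\<^sup>2\<bar>
      \<le> 1 * (1 + nrm 1 x y ^ 1 + nrm 1 x' y' ^ 1) * nrm 1 (x - x') (y - y')"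
    by (simp add: mult.commute)
qed

definition ball_cutoff :: "real \<Rightarrow> 'a::real_normed_vector \<Rightarrow> real" where
  "ball_cutoff R v = min 1 (max 0 (R - norm v))"

lemma ball_cutoff_nonneg: "0 \<le> ball_cutoff R v"
  and ball_cutoff_le_1: "ball_cutoff R v \<le> 1"
  unfolding ball_cutoff_def by auto

lemma ball_cutoff_eq_1: "norm v \<le> R - 1 \<Longrightarrow> ball_cutoff R v = 1"
  unfolding ball_cutoff_def by simp

lemma abs_ball_cutoff_diff_le: "\<bar>ball_cutoff R u - ball_cutoff R v\<bar> \<le> norm (u - v)"
  using norm_triangle_ineq3[of u v] unfolding ball_cutoff_def by (simp add: abs_le_iff) linarith

lemma borel_measurable_ball_cutoff[measurable]:
  "ball_cutoff R \<in> borel_measurable (borel :: 'a::euclidean_space measure)"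
  unfolding ball_cutoff_def[abs_def] by measurable

lemma lip_poly1_ball_cutoff: "lip_poly1 (\<lambda>y. ball_cutoff R (c + y))"
  unfolding lip_poly1_def
proof (intro exI allI)
  fix y y' :: 'a
  show "\<bar>ball_cutoff R (c + y) - ball_cutoff R (c + y')\<bar> \<le> 1 * (1 + norm y ^ 0 + norm y' ^ 0) * norm (y - y')"
    using abs_ball_cutoff_diff_le[of R "c + y" "c + y'"] by simp
qed

lemma abs_prod_diff_le_sum_abs_diff:
  fixes a b :: "nat \<Rightarrow> real"
  assumes "\<And>k. k < m \<Longrightarrow> a k \<in> {0..1} \<and> b k \<in> {0..1}"
  shows "\<bar>(\<Prod>k<m. a k) - (\<Prod>k<m. b k)\<bar> \<le> (\<Sum>k<m. \<bar>a k - b k\<bar>)"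
  using assms
proof (induction m)
  case (Suc m)
  let ?A = "\<Prod>k<m. a k" and ?B = "\<Prod>k<m. b k"
  have "0 \<le> ?A" "?A \<le> 1" "0 \<le> ?B" "?B \<le> 1"
    using Suc.prems by (auto intro!: prod_nonneg prod_le_1)
  then have A: "\<bar>?A\<bar> \<le> 1" and B: "\<bar>?B\<bar> \<le> 1" and am: "\<bar>a m\<bar> \<le> 1"
    using Suc.prems by auto
  have "\<bar>?A * a m - ?B * b m\<bar> = \<bar>(?A - ?B) * a m + ?B * (a m - b m)\<bar>"
    by (simp add: algebra_simps)
  also have "\<dots> \<le> \<bar>?A - ?B\<bar> * \<bar>a m\<bar> + \<bar>?B\<bar> * \<bar>a m - b m\<bar>"
    by (simp add: abs_mult[symmetric] abs_triangle_ineq)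
  also have "\<dots> \<le> \<bar>?A - ?B\<bar> + \<bar>a m - b m\<bar>"
    using A B am by (intro add_mono mult_left_le mult_left_le_one_le) auto
  also have "\<dots> \<le> (\<Sum>k<Suc m. \<bar>a k - b k\<bar>)"
    using Suc by simp
  finally show ?case by simp
qed simp

text \<open>The grid product of m + 1 cutoffs as a test function of the cylinder vector
  (B_0, B_T, ..., B_{mT}) and the last increment B_{(m+1)T} - B_{mT}; the entry B_0 is unused.\<close>
definition cyl_cutoff :: "'a::real_normed_vector \<Rightarrow> real \<Rightarrow> nat \<Rightarrow> (nat \<Rightarrow> 'a) \<Rightarrow> 'a \<Rightarrow> real"
  where "cyl_cutoff x R m xs y = (\<Prod>k<m. ball_cutoff R (x + xs (Suc k))) * ball_cutoff R (x + xs m + y)"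

lemma lip_poly_cyl_cutoff: "lip_poly (Suc m) (cyl_cutoff x R m)"
  unfolding lip_poly_def
proof (intro exI allI)
  fix xs xs' :: "nat \<Rightarrow> 'a" and y y' :: 'a
  let ?S = "\<Sum>i<Suc m. norm (xs i - xs' i)"
  let ?a = "\<lambda>k. if k < m then ball_cutoff R (x + xs (Suc k)) else ball_cutoff R (x + xs m + y)"
  let ?b = "\<lambda>k. if k < m then ball_cutoff R (x + xs' (Suc k)) else ball_cutoff R (x + xs' m + y')"
  have "\<bar>cyl_cutoff x R m xs y - cyl_cutoff x R m xs' y'\<bar> \<le> (\<Sum>k<Suc m. \<bar>?a k - ?b k\<bar>)"
    using abs_prod_diff_le_sum_abs_diff[of "Suc m" ?a ?b]
    by (simp add: cyl_cutoff_def ball_cutoff_nonneg ball_cutoff_le_1)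
  also have "\<dots> \<le> (\<Sum>k<m. norm (xs (Suc k) - xs' (Suc k))) + (norm (xs m - xs' m) + norm (y - y'))"
  proof (simp, intro add_mono sum_mono)
    show "\<bar>ball_cutoff R (x + xs (Suc k)) - ball_cutoff R (x + xs' (Suc k))\<bar>
        \<le> norm (xs (Suc k) - xs' (Suc k))" for k
      using abs_ball_cutoff_diff_le[of R "x + xs (Suc k)" "x + xs' (Suc k)"] by simp
    have "x + xs m + y - (x + xs' m + y') = (xs m - xs' m) + (y - y')"
      by (simp add: algebra_simps)
    then show "\<bar>ball_cutoff R (x + xs m + y) - ball_cutoff R (x + xs' m + y')\<bar>
        \<le> norm (xs m - xs' m) + norm (y - y')"
      using abs_ball_cutoff_diff_le[of R "x + xs m + y" "x + xs' m + y'"] norm_triangle_ineq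
      by (metis order.trans)
  qed
  also have "\<dots> \<le> ?S + (?S + norm (y - y'))"
  proof -
    have "(\<Sum>k<m. norm (xs (Suc k) - xs' (Suc k))) = (\<Sum>i\<in>Suc ` {..<m}. norm (xs i - xs' i))"
      by (simp add: sum.reindex)
    also have "\<dots> \<le> ?S"
      by (rule sum_mono2) auto
    moreover have "norm (xs m - xs' m) \<le> ?S"
      by (rule member_le_sum[where f="\<lambda>i. norm (xs i - xs' i)"]) auto
    ultimately show ?thesis by linarith
  qed
  also have "\<dots> \<le> 2 * (1 + nrm (Suc m) xs y ^ 0 + nrm (Suc m) xs' y' ^ 0) * nrm (Suc m) (xs - xs') (y - y')"
    by (simp add: nrm_def sum_nonneg)
  finally show "\<bar>cyl_cutoff x R m xs y - cyl_cutoff x R m xs' y'\<bar>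
      \<le> 2 * (1 + nrm (Suc m) xs y ^ 0 + nrm (Suc m) xs' y' ^ 0) * nrm (Suc m) (xs - xs') (y - y')" .
qed

definition grid_cutoff :: "'a::real_normed_vector \<Rightarrow> real \<Rightarrow> real \<Rightarrow> nat \<Rightarrow> (real \<Rightarrow> 'a) \<Rightarrow> real"
  where "grid_cutoff x R T m w = (\<Prod>k<m. ball_cutoff R (x + w (real (Suc k) * T)))"

lemma grid_cutoff_nonneg: "0 \<le> grid_cutoff x R T m w"
  and grid_cutoff_le_1: "grid_cutoff x R T m w \<le> 1"
  unfolding grid_cutoff_def by (auto intro!: prod_nonneg prod_le_1 simp: ball_cutoff_nonneg ball_cutoff_le_1)

lemma cyl_cutoff_grid:
  "cyl_cutoff x R m (cyl (Suc m) (\<lambda>i. real i * T) w) y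
    = grid_cutoff x R T m w * ball_cutoff R (x + w (real m * T) + y)"
proof -
  have "(\<Prod>k<m. ball_cutoff R (x + cyl (Suc m) (\<lambda>i. real i * T) w (Suc k)))
      = (\<Prod>k<m. ball_cutoff R (x + w (real (Suc k) * T)))"
    by (rule prod.cong) (auto simp: cyl_def)
  then show ?thesis
    unfolding cyl_cutoff_def grid_cutoff_def by (simp add: cyl_def)
qed

lemma grid_cutoff_Suc_eq_cyl_cutoff:
  "grid_cutoff x R T (Suc m) w
    = cyl_cutoff x R m (cyl (Suc m) (\<lambda>i. real i * T) w) (w (real m * T + T) - w (real m * T))"
proof -
  have "real m * T + T = real (Suc m) * T"
    by (simp add: algebra_simps)
  then show ?thesis
    unfolding cyl_cutoff_grid by (simp add: grid_cutoff_def)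
qed

lemma norm_add_pow4_le: "(norm (u + v)) ^ 4 \<le> 8 * ((norm u) ^ 4 + (norm v) ^ 4)"
proof -
  have sq: "(p + q)\<^sup>2 \<le> 2 * (p\<^sup>2 + q\<^sup>2)" for p q :: real
    using sum_squares_bound[of p q] by (simp add: power2_sum)
  have "(norm (u + v)) ^ 4 \<le> ((norm u + norm v)\<^sup>2)\<^sup>2"
    by (simp add: power_mono norm_triangle_ineq flip: power_mult)
  also have "\<dots> \<le> (2 * ((norm u)\<^sup>2 + (norm v)\<^sup>2))\<^sup>2"
    by (intro power_mono sq) auto
  also have "\<dots> = 4 * ((norm u)\<^sup>2 + (norm v)\<^sup>2)\<^sup>2"
    by (simp only: power_mult_distrib) simp
  also have "\<dots> \<le> 4 * (2 * (((norm u)\<^sup>2)\<^sup>2 + ((norm v)\<^sup>2)\<^sup>2))"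
    by (intro mult_left_mono sq) simp
  finally show ?thesis by (simp flip: power_mult)
qed

lemma ball_cutoff_le_quadratic:
  assumes "0 \<le> e"
  shows "ball_cutoff R v \<le> 1 - 2 * e * ((norm v)\<^sup>2 - R\<^sup>2) + e\<^sup>2 * (norm v) ^ 4"
proof (cases "norm v < R")
  case True
  then have "(norm v)\<^sup>2 < R\<^sup>2"
    by (intro power_strict_mono) auto
  then have "0 \<le> e * (R\<^sup>2 - (norm v)\<^sup>2)"
    using assms by simp
  moreover have "1 - 2 * e * ((norm v)\<^sup>2 - R\<^sup>2) + e\<^sup>2 * (norm v) ^ 4
      = 1 + 2 * (e * (R\<^sup>2 - (norm v)\<^sup>2)) + e\<^sup>2 * (norm v) ^ 4"
    by (simp add: algebra_simps)
  moreover have "0 \<le> e\<^sup>2 * (norm v) ^ 4"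
    by simp
  ultimately show ?thesis
    using ball_cutoff_le_1[of R v] by linarith
next
  case False
  have "1 - 2 * e * ((norm v)\<^sup>2 - R\<^sup>2) + e\<^sup>2 * (norm v) ^ 4 = (1 - e * (norm v)\<^sup>2)\<^sup>2 + 2 * e * R\<^sup>2"
    by (simp add: power2_eq_square power4_eq_xxxx algebra_simps)
  with False assms show ?thesis
    by (simp add: ball_cutoff_def)
qed

text \<open>The choice of e balances the linear gain 2e(a + E2 - R^2) against the quartic loss
  uniformly in the squared distance a of the starting point.\<close>
lemma cutoff_bound_arith:
  fixes a V R E2 E4 \<mu> :: real
  assumes a: "0 \<le> a" and V: "0 < V" "V \<le> \<mu>" and R: "2 * R\<^sup>2 \<le> V"
    and E2: "V \<le> E2" and E4: "E4 \<le> \<mu>" and \<mu>: "1 \<le> \<mu>"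
  defines "e \<equiv> V / (16 * \<mu> * (a + \<mu>))"
  shows "1 - 2 * e * (a + E2 - R\<^sup>2) + 8 * e\<^sup>2 * (a\<^sup>2 + E4) \<le> 1 - V\<^sup>2 / (32 * \<mu>\<^sup>2)"
proof -
  define l where "l = V / (16 * \<mu>)"
  have e: "e = l / (a + \<mu>)" and l0: "0 \<le> l" and am: "0 < a + \<mu>"
    using a V \<mu> unfolding e_def l_def by auto
  have "l * V / \<mu> \<le> 2 * e * (a + V / 2)"
  proof -
    have "V * (a + \<mu>) \<le> (a + V / 2) * (2 * \<mu>)"
      using mult_left_mono[OF V(2) a] mult_nonneg_nonneg[OF _ a, of \<mu>] V \<mu>
      by (simp add: algebra_simps)
    from mult_right_mono[OF this l0] have "l * V * (a + \<mu>) \<le> 2 * l * \<mu> * (a + V / 2)"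
      by (simp add: algebra_simps)
    then show ?thesis
      using \<mu> am unfolding e by (simp add: field_simps)
  qed
  moreover have "2 * e * (a + V / 2) \<le> 2 * e * (a + E2 - R\<^sup>2)"
    using R E2 e l0 am by (intro mult_left_mono) auto
  moreover have "e\<^sup>2 * (a\<^sup>2 + E4) \<le> l\<^sup>2"
  proof -
    have "E4 \<le> \<mu> * \<mu>"
      using E4 \<mu> by (smt (verit) mult_le_cancel_left1)
    moreover have "0 \<le> 2 * a * \<mu>" and "(a + \<mu>)\<^sup>2 = a\<^sup>2 + 2 * a * \<mu> + \<mu> * \<mu>"
      using a \<mu> by (simp_all add: power2_eq_square algebra_simps)
    ultimately have "a\<^sup>2 + E4 \<le> (a + \<mu>)\<^sup>2"
      by linarith
    then show ?thesis
      using am unfolding e by (simp add: power_divide divide_le_eq mult_left_mono)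
  qed
  moreover have "1 - l * V / \<mu> + 8 * l\<^sup>2 = 1 - V\<^sup>2 / (32 * \<mu>\<^sup>2)"
    unfolding l_def using \<mu> by (simp add: field_simps power2_eq_square)
  ultimately show ?thesis by linarith
qed

lemma (in prob_space) expectation_ball_cutoff_le:
  fixes X :: "'a \<Rightarrow> 'b::euclidean_space"
  assumes X: "random_variable borel X"
    and int2: "integrable M (\<lambda>w. (norm (X w))\<^sup>2)" and int4: "integrable M (\<lambda>w. norm (X w) ^ 4)"
    and intz: "integrable M (\<lambda>w. z \<bullet> X w)" and centered: "expectation (\<lambda>w. z \<bullet> X w) = 0"
    and V: "0 < V" "2 * R\<^sup>2 \<le> V" "V \<le> expectation (\<lambda>w. (norm (X w))\<^sup>2)"
    and M4: "0 \<le> M4" "expectation (\<lambda>w. norm (X w) ^ 4) \<le> M4"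
  shows "expectation (\<lambda>w. ball_cutoff R (z + X w)) \<le> 1 - V\<^sup>2 / (32 * (M4 + V + 1)\<^sup>2)"
proof -
  define \<mu> where "\<mu> = M4 + V + 1"
  define a where "a = (norm z)\<^sup>2"
  define e where "e = V / (16 * \<mu> * (a + \<mu>))"
  have e0: "0 \<le> e"
    using V M4 unfolding e_def \<mu>_def a_def by simp
  let ?h = "\<lambda>w. 1 - 2 * e * (a + 2 * (z \<bullet> X w) + (norm (X w))\<^sup>2 - R\<^sup>2) + 8 * e\<^sup>2 * (a\<^sup>2 + norm (X w) ^ 4)"
  have "ball_cutoff R (z + X w) \<le> ?h w" for w
  proof -
    have "(norm (z + X w))\<^sup>2 = a + 2 * (z \<bullet> X w) + (norm (X w))\<^sup>2"
      unfolding a_def by (simp add: power2_norm_eq_inner inner_commute algebra_simps)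
    then have "ball_cutoff R (z + X w)
        \<le> 1 - 2 * e * (a + 2 * (z \<bullet> X w) + (norm (X w))\<^sup>2 - R\<^sup>2) + e\<^sup>2 * norm (z + X w) ^ 4"
      using ball_cutoff_le_quadratic[OF e0, of R "z + X w"] by simp
    moreover have "e\<^sup>2 * norm (z + X w) ^ 4 \<le> 8 * e\<^sup>2 * (a\<^sup>2 + norm (X w) ^ 4)"
      using mult_left_mono[OF norm_add_pow4_le[of z "X w"], of "e\<^sup>2"]
      unfolding a_def by (simp add: algebra_simps flip: power_mult)
    ultimately show ?thesis
      by linarith
  qed
  moreover have "integrable M (\<lambda>w. ball_cutoff R (z + X w))"
    using X by (intro integrable_const_bound[where B=1]) (auto simp: ball_cutoff_nonneg ball_cutoff_le_1)
  ultimately have "expectation (\<lambda>w. ball_cutoff R (z + X w)) \<le> expectation ?h"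
    using int2 int4 intz by (intro integral_mono) auto
  also have "\<dots> = 1 - 2 * e * (a + expectation (\<lambda>w. (norm (X w))\<^sup>2) - R\<^sup>2)
      + 8 * e\<^sup>2 * (a\<^sup>2 + expectation (\<lambda>w. norm (X w) ^ 4))"
    using int2 int4 intz centered by (simp add: prob_space algebra_simps)
  also have "\<dots> \<le> 1 - V\<^sup>2 / (32 * \<mu>\<^sup>2)"
    unfolding e_def using V M4 int4 by (intro cutoff_bound_arith) (auto simp: a_def \<mu>_def)
  finally show ?thesis unfolding \<mu>_def .
qed

text \<open>Taking the supremum over rational times only makes it a countable supremum of
  coordinates, hence measurable; for paths in Omega it is the running maximum of the norm.\<close>
definition path_sup :: "real \<Rightarrow> (real \<Rightarrow> 'a::real_normed_vector) \<Rightarrow> real" where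
  "path_sup t w = (SUP s\<in>\<rat> \<inter> {0..t}. norm (w s))"

lemma continuous_on_Omega: "w \<in> Omega \<Longrightarrow> continuous_on {0..t} w"
  unfolding Omega_def by (auto intro: continuous_on_subset)

lemma bdd_above_norm_path:
  assumes "w \<in> Omega" "A \<subseteq> {0..t}"
  shows "bdd_above ((\<lambda>s. norm (w s)) ` A)"
proof -
  have "compact ((\<lambda>s. norm (w s)) ` {0..t})"
    by (intro compact_continuous_image continuous_on_norm continuous_on_Omega assms) auto
  then have "bdd_above ((\<lambda>s. norm (w s)) ` {0..t})"
    by (intro bounded_imp_bdd_above compact_imp_bounded)
  then show ?thesis
    by (rule bdd_above_mono) (use assms(2) in auto)
qed

lemma norm_le_path_sup:
  assumes w: "w \<in> Omega" and s: "0 \<le> s" "s \<le> t"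
  shows "norm (w s) \<le> path_sup t w"
proof -
  define q where "q n = real_of_int \<lfloor>s * real (Suc n)\<rfloor> / real (Suc n)" for n
  have q_le: "q n \<le> s" for n
    unfolding q_def using s by (simp add: divide_le_eq)
  have q_rat: "q n \<in> \<rat> \<inter> {0..t}" for n
    using q_le[of n] s unfolding q_def by auto
  have q_ge: "s - inverse (real (Suc n)) \<le> q n" for n
  proof -
    have "s * real (Suc n) - 1 \<le> real_of_int \<lfloor>s * real (Suc n)\<rfloor>"
      by linarith
    then have "(s * real (Suc n) - 1) / real (Suc n) \<le> q n"
      unfolding q_def by (intro divide_right_mono) auto
    then show ?thesis
      by (simp add: field_simps)
  qed
  have "q \<longlonglongrightarrow> s"
  proof (rule real_tendsto_sandwich[where f="\<lambda>n. s - inverse (real (Suc n))" and h="\<lambda>n. s"])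
    show "(\<lambda>n. s - inverse (real (Suc n))) \<longlonglongrightarrow> s"
      using tendsto_diff[OF tendsto_const LIMSEQ_inverse_real_of_nat, of s] by simp
  qed (use q_ge q_le in auto)
  have upper: "norm (w (q n)) \<le> path_sup t w" for n
    unfolding path_sup_def
    by (rule cSUP_upper) (use q_rat bdd_above_norm_path[OF w, of "\<rat> \<inter> {0..t}" t] in auto)
  from \<open>q \<longlonglongrightarrow> s\<close> have "(\<lambda>n. w (q n)) \<longlonglongrightarrow> w s"
    by (rule continuous_on_tendsto_compose[OF continuous_on_Omega[OF w, of t]]) (use q_rat s in auto)
  then have "(\<lambda>n. norm (w (q n))) \<longlonglongrightarrow> norm (w s)"
    by (rule tendsto_norm)
  then show ?thesis
    by (rule LIMSEQ_le_const2) (use upper in auto)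
qed

lemma path_sup_le_add:
  assumes u: "u \<in> Omega" and v: "v \<in> Omega" and t: "0 \<le> t"
    and close: "\<And>s. s \<in> {0..t} \<Longrightarrow> dist (u s) (v s) \<le> e"
  shows "path_sup t u \<le> path_sup t v + e"
  unfolding path_sup_def
proof (rule cSUP_least)
  show "\<rat> \<inter> {0..t} \<noteq> {}"
    using t by (metis Rats_0 IntI atLeastAtMost_iff order_refl empty_iff)
  fix s assume s: "s \<in> \<rat> \<inter> {0..t}"
  have "norm (u s) \<le> norm (v s) + dist (u s) (v s)"
    by (metis dist_norm norm_triangle_sub)
  also have "\<dots> \<le> path_sup t v + e"
    using norm_le_path_sup[OF v, of s t] close[of s] s by auto
  finally show "norm (u s) \<le> (SUP s\<in>\<rat> \<inter> {0..t}. norm (v s)) + e"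
    unfolding path_sup_def .
qed

definition sup_cutoff :: "real \<Rightarrow> real \<Rightarrow> (real \<Rightarrow> 'a::real_normed_vector) \<Rightarrow> real" where
  "sup_cutoff t L w = min 1 (max 0 (path_sup t w - L))"

lemma sup_cutoff_nonneg: "0 \<le> sup_cutoff t L w"
  and sup_cutoff_le_1: "sup_cutoff t L w \<le> 1"
  unfolding sup_cutoff_def by auto

lemma bcont_fun_sup_cutoff:
  assumes t: "0 \<le> t"
  shows "bcont_fun (sup_cutoff t L :: (real \<Rightarrow> 'a::real_normed_vector) \<Rightarrow> real)"
  unfolding bcont_fun_def
proof (intro conjI allI impI)
  show "\<exists>K. \<forall>w\<in>Omega. \<bar>sup_cutoff t L (w :: real \<Rightarrow> 'a)\<bar> \<le> K"
    by (intro exI[of _ 1]) (simp add: sup_cutoff_nonneg sup_cutoff_le_1)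
  fix ws :: "nat \<Rightarrow> real \<Rightarrow> 'a" and w
  assume ws: "\<forall>n. ws n \<in> Omega" and w: "w \<in> Omega" and lu: "lu_conv ws w"
  show "(\<lambda>n. sup_cutoff t L (ws n)) \<longlonglongrightarrow> sup_cutoff t L w"
    unfolding tendsto_iff
  proof (intro allI impI)
    fix e :: real assume e: "0 < e"
    have "eventually (\<lambda>n. \<forall>s\<in>{0..t}. dist (ws n s) (w s) < e / 2) sequentially"
      using lu[unfolded lu_conv_def, rule_format, of "e / 2" t] e by simp
    then show "eventually (\<lambda>n. dist (sup_cutoff t L (ws n)) (sup_cutoff t L w) < e) sequentially"
    proof eventually_elim
      case (elim n)
      have "path_sup t (ws n) \<le> path_sup t w + e / 2"
        by (rule path_sup_le_add[OF ws[rule_format] w t]) (use elim in \<open>auto intro: less_imp_le\<close>)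
      moreover have "path_sup t w \<le> path_sup t (ws n) + e / 2"
        by (rule path_sup_le_add[OF w ws[rule_format] t])
          (use elim in \<open>auto intro: less_imp_le simp: dist_commute\<close>)
      ultimately show ?case
        using e unfolding sup_cutoff_def dist_real_def by linarith
    qed
  qed
qed

lemma BESQ_less_before_hit_time:
  assumes "ereal s < hit_time x b w" "0 \<le> s"
  shows "BESQ x s w < b"
proof (rule ccontr)
  assume "\<not> BESQ x s w < b"
  then have "hit_time x b w \<le> ereal s"
    unfolding hit_time_def using assms(2) by (intro Inf_lower) auto
  with assms(1) show False by simp
qed

lemma grid_cutoff_eq_1_before_hit_time:
  assumes T: "0 \<le> T" and mt: "real m * T \<le> t" and hit: "ereal t < hit_time x b w"
  shows "grid_cutoff x (sqrt b + 1) T m w = 1"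
proof -
  have "ball_cutoff (sqrt b + 1) (x + w (real (Suc k) * T)) = 1" if "k < m" for k
  proof (rule ball_cutoff_eq_1)
    have "real (Suc k) * T \<le> t"
      using that T mt by (meson less_eq_real_def mult_right_mono of_nat_le_iff Suc_leI order.trans)
    then have "ereal (real (Suc k) * T) < hit_time x b w"
      using hit by (meson ereal_less_eq(3) le_less_trans)
    then have "BESQ x (real (Suc k) * T) w < b"
      using T by (intro BESQ_less_before_hit_time) auto
    then show "norm (x + w (real (Suc k) * T)) \<le> sqrt b + 1 - 1"
      unfolding BESQ_def by (simp add: add.commute real_less_rsqrt less_imp_le)
  qed
  then show ?thesis
    unfolding grid_cutoff_def by simp
qed

lemma hit_time_less_imp_path_sup_ge:
  assumes w: "w \<in> Omega" and hit: "hit_time x b w < ereal t" and level: "(L + 1 + norm x)\<^sup>2 \<le> b"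
  shows "L + 1 \<le> path_sup t w"
proof -
  obtain s where s: "0 \<le> s" "s < t" "b \<le> BESQ x s w"
    using hit unfolding hit_time_def Inf_less_iff by auto
  then have "(L + 1 + norm x)\<^sup>2 \<le> (norm (w s + x))\<^sup>2"
    using level unfolding BESQ_def by simp
  then have "L + 1 + norm x \<le> norm (w s + x)"
    by (rule power2_le_imp_le) simp
  moreover have "norm (w s + x) \<le> norm (w s) + norm x"
    by (rule norm_triangle_ineq)
  moreover have "norm (w s) \<le> path_sup t w"
    using s by (intro norm_le_path_sup[OF w]) auto
  ultimately show ?thesis by linarith
qed

locale G_BM_space =
  fixes \<P> :: "(real \<Rightarrow> real^'d) measure set" and sl sh :: real
  assumes framework: "G_framework \<P> sl sh"
begin

lemma family_nonempty: "\<P> \<noteq> {}"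
  using framework unfolding G_framework_def by blast

lemma prob_space_family: "P \<in> \<P> \<Longrightarrow> prob_space P"
  and space_family: "P \<in> \<P> \<Longrightarrow> space P = Omega"
  using framework unfolding G_framework_def by auto

lemma coordinate_measurable:
  assumes "P \<in> \<P>" "0 \<le> s"
  shows "(\<lambda>w. w s) \<in> borel_measurable P"
proof -
  have "sets P = sets Wiener"
    using framework assms(1) unfolding G_framework_def by auto
  then have "measurable P (borel :: (real^'d) measure) = measurable Wiener borel"
    by (rule measurable_cong_sets) simp
  then show ?thesis
    using coordinate_measurable_Wiener[OF assms(2)] by simp
qed

lemma integrable_norm_power: "P \<in> \<P> \<Longrightarrow> 0 \<le> t \<Longrightarrow> integrable P (\<lambda>w. norm (w t) ^ p)"
  using framework unfolding G_framework_def G_BM_def by auto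

lemma moment_bounded:
  assumes "0 \<le> t"
  obtains B where "0 \<le> B" "\<And>P. P \<in> \<P> \<Longrightarrow> integral\<^sup>L P (\<lambda>w. norm (w t) ^ p) \<le> B"
proof -
  have "bdd_above ((\<lambda>P. integral\<^sup>L P (\<lambda>w. norm (w t) ^ p)) ` \<P>)"
    using framework assms unfolding G_framework_def G_BM_def by auto
  then obtain B where "\<And>P. P \<in> \<P> \<Longrightarrow> integral\<^sup>L P (\<lambda>w. norm (w t) ^ p) \<le> B"
    by (auto simp: bdd_above_def)
  then show ?thesis
    by (intro that[of "max B 0"]) (auto intro: max.coboundedI1)
qed

lemma upE_increment_stationary:
  "0 \<le> t \<Longrightarrow> 0 \<le> s \<Longrightarrow> lip_poly1 \<phi> \<Longrightarrow>
    upE \<P> (\<lambda>w. \<phi> (w (t + s) - w t)) = upE \<P> (\<lambda>w. \<phi> (w s))"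
  using framework unfolding G_framework_def G_BM_def by blast

lemma upE_increment_independent:
  "0 \<le> t \<Longrightarrow> 0 \<le> s \<Longrightarrow> (\<forall>i<n. 0 \<le> ts i \<and> ts i \<le> t) \<Longrightarrow> lip_poly n \<phi> \<Longrightarrow>
    upE \<P> (\<lambda>w. \<phi> (cyl n ts w) (w (t + s) - w t)) =
    upE \<P> (\<lambda>w. upE \<P> (\<lambda>w'. \<phi> (cyl n ts w) (w' (t + s) - w' t)))"
  using framework unfolding G_framework_def G_BM_def by blast

lemma lower_volatility_pos: "0 < sl"
  using framework unfolding G_framework_def condA_def by blast

lemma integral_le_upE_of_le_1:
  assumes "P \<in> \<P>" "\<And>w. f w \<le> 1"
  shows "integral\<^sup>L P f \<le> upE \<P> f"
proof (rule integral_le_upE[OF assms(1)])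
  fix Q assume Q: "Q \<in> \<P>"
  interpret prob_space Q
    by (rule prob_space_family[OF Q])
  have "integral\<^sup>L Q f \<le> integral\<^sup>L Q (\<lambda>w. 1)"
    using assms(2) by (intro integral_mono') auto
  then show "integral\<^sup>L Q f \<le> 1"
    by (simp add: prob_space)
qed

lemma integrable_inner:
  assumes "P \<in> \<P>" "0 \<le> t"
  shows "integrable P (\<lambda>w. a \<bullet> w t)"
proof (rule Bochner_Integration.integrable_bound)
  show "integrable P (\<lambda>w. norm a * norm (w t) ^ 1)"
    using integrable_norm_power[OF assms, of 1] by simp
  show "AE w in P. norm (a \<bullet> w t) \<le> norm (norm a * norm (w t) ^ 1)"
    by (auto simp: Cauchy_Schwarz_ineq2)
qed (use coordinate_measurable[OF assms] in measurable)

lemma integral_inner_eq_0: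
  assumes P: "P \<in> \<P>" and t: "0 \<le> t"
  shows "integral\<^sup>L P (\<lambda>w. a \<bullet> w t) = 0"
proof -
  obtain B where B: "\<And>Q. Q \<in> \<P> \<Longrightarrow> integral\<^sup>L Q (\<lambda>w. norm (w t) ^ 1) \<le> B"
    using moment_bounded[OF t] by metis
  have le_upE: "integral\<^sup>L P (\<lambda>w. c \<bullet> w t) \<le> upE \<P> (\<lambda>w. c \<bullet> w t)" for c
  proof (rule integral_le_upE[OF P])
    fix Q assume Q: "Q \<in> \<P>"
    have "integral\<^sup>L Q (\<lambda>w. c \<bullet> w t) \<le> integral\<^sup>L Q (\<lambda>w. norm c * norm (w t) ^ 1)"
      using integrable_inner[OF Q t] integrable_norm_power[OF Q t, of 1]
      by (intro integral_mono) (auto intro: order.trans[OF abs_ge_self Cauchy_Schwarz_ineq2])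
    also have "\<dots> \<le> norm c * B"
      using B[OF Q] by (simp add: mult_left_mono)
    finally show "integral\<^sup>L Q (\<lambda>w. c \<bullet> w t) \<le> norm c * B" .
  qed
  have "upE \<P> (\<lambda>w. a \<bullet> w t) = 0" "upE \<P> (\<lambda>w. - (a \<bullet> w t)) = 0"
    using framework t unfolding G_framework_def G_BM_def by blast+
  then show ?thesis
    using le_upE[of a] le_upE[of "- a"] by simp
qed

lemma cap_nonneg: "0 \<le> cap \<P> A"
proof -
  obtain P where P: "P \<in> \<P>"
    using family_nonempty by blast
  have "measure P A \<le> cap \<P> A"
    unfolding cap_def using prob_space_family
    by (intro cSUP_upper[OF P]) (auto intro!: bdd_aboveI2[where M=1] prob_space.prob_le_1)
  then show ?thesis
    by (meson measure_nonneg order.trans)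
qed

lemma cap_least: "(\<And>P. P \<in> \<P> \<Longrightarrow> measure P A \<le> c) \<Longrightarrow> cap \<P> A \<le> c"
  unfolding cap_def using family_nonempty by (intro cSUP_least) auto

lemma less_cap_imp_measure:
  assumes "e < cap \<P> A"
  obtains P where "P \<in> \<P>" "e < measure P A"
  using assms family_nonempty prob_space_family unfolding cap_def
  by (subst (asm) less_cSUP_iff) (auto intro!: bdd_aboveI2[where M=1] prob_space.prob_le_1)

section \<open>The lower second moment\<close>

lemma integral_neg_norm_sq_shifted_increment:
  assumes P: "P \<in> \<P>" and t: "0 \<le> t" and s: "0 \<le> s"
  shows "integral\<^sup>L P (\<lambda>w. - (norm (c + (w (t + s) - w t)))\<^sup>2)
    = integral\<^sup>L P (\<lambda>w. - (norm (w (t + s) - w t))\<^sup>2) - (norm c)\<^sup>2"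
proof -
  interpret prob_space P
    by (rule prob_space_family[OF P])
  have ts: "0 \<le> t + s"
    using t s by simp
  have "integrable P (\<lambda>w. (norm (w (t + s) - w t))\<^sup>2)"
    using coordinate_measurable[OF P] integrable_norm_power[OF P, of _ 2] t ts
    by (intro integrable_norm_sq_diff) auto
  moreover have "integrable P (\<lambda>w. c \<bullet> (w (t + s) - w t))"
    using integrable_inner[OF P t] integrable_inner[OF P ts] by (simp add: inner_diff_right)
  moreover have "expectation (\<lambda>w. c \<bullet> (w (t + s) - w t)) = 0"
    using integrable_inner[OF P t] integrable_inner[OF P ts]
      integral_inner_eq_0[OF P t] integral_inner_eq_0[OF P ts]
    by (simp add: inner_diff_right)
  ultimately show ?thesis
    by (simp add: expectation_norm_sq_add_centered)
qed

definition neg_second_moment :: "real \<Rightarrow> real" where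
  "neg_second_moment t = upE \<P> (\<lambda>w. - (norm (w t))\<^sup>2)"

lemma upE_neg_norm_sq_shifted_increment:
  assumes t: "0 \<le> t" and s: "0 \<le> s"
  shows "upE \<P> (\<lambda>w. - (norm (c + (w (t + s) - w t)))\<^sup>2) = - (norm c)\<^sup>2 + neg_second_moment s"
proof -
  have "upE \<P> (\<lambda>w. - (norm (c + (w (t + s) - w t)))\<^sup>2)
      = upE \<P> (\<lambda>w. - (norm (w (t + s) - w t))\<^sup>2) + - (norm c)\<^sup>2"
    using integral_neg_norm_sq_shifted_increment[OF _ t s]
    by (intro upE_add_const[OF family_nonempty, where c=0]) auto
  also have "upE \<P> (\<lambda>w. - (norm (w (t + s) - w t))\<^sup>2) = neg_second_moment s"
    unfolding neg_second_moment_def using upE_increment_stationary[OF t s lip_poly1_neg_norm_sq] .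
  finally show ?thesis
    by simp
qed

lemma neg_second_moment_add:
  assumes t: "0 \<le> t" and s: "0 \<le> s"
  shows "neg_second_moment (t + s) = neg_second_moment t + neg_second_moment s"
proof -
  let ?\<phi> = "\<lambda>(xs :: nat \<Rightarrow> real^'d) y. - (norm (xs 0 + y))\<^sup>2"
  have "neg_second_moment (t + s) = upE \<P> (\<lambda>w. ?\<phi> (cyl 1 (\<lambda>_. t) w) (w (t + s) - w t))"
    unfolding neg_second_moment_def cyl_def by simp
  also have "\<dots> = upE \<P> (\<lambda>w. upE \<P> (\<lambda>w'. ?\<phi> (cyl 1 (\<lambda>_. t) w) (w' (t + s) - w' t)))"
    using t s lip_poly_neg_norm_sq_add by (intro upE_increment_independent) auto
  also have "\<dots> = upE \<P> (\<lambda>w. - (norm (w t))\<^sup>2 + neg_second_moment s)"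
    by (simp add: cyl_def upE_neg_norm_sq_shifted_increment[OF t s])
  also have "\<dots> = neg_second_moment t + neg_second_moment s"
    unfolding neg_second_moment_def
  proof (rule upE_add_const[OF family_nonempty, where c=0])
    fix P assume P: "P \<in> \<P>"
    interpret prob_space P
      by (rule prob_space_family[OF P])
    show "integral\<^sup>L P (\<lambda>w. - (norm (w t))\<^sup>2 + upE \<P> (\<lambda>w. - (norm (w s))\<^sup>2))
        = integral\<^sup>L P (\<lambda>w. - (norm (w t))\<^sup>2) + upE \<P> (\<lambda>w. - (norm (w s))\<^sup>2)"
      using integrable_norm_power[OF P t, of 2] by (simp add: prob_space)
  qed simp
  finally show ?thesis .
qed

lemma neg_second_moment_0: "neg_second_moment 0 = 0"
proof -
  have "integral\<^sup>L P (\<lambda>w::real \<Rightarrow> real^'d. - (norm (w 0))\<^sup>2) = integral\<^sup>L P (\<lambda>_. 0)"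
    if "P \<in> \<P>" for P
    by (rule Bochner_Integration.integral_cong) (auto simp: space_family[OF that] Omega_def)
  then show ?thesis
    unfolding neg_second_moment_def upE_def using family_nonempty by simp
qed

lemma neg_second_moment_1: "neg_second_moment 1 = - sl\<^sup>2 * real CARD('d)"
proof -
  let ?A = "mat (- 1) :: real^'d^'d"
  have "Gfun \<P> ?A = G' sl sh (trace ?A)"
    using framework unfolding G_framework_def condA_def by simp
  moreover have "(?A *v v) \<bullet> v = - (norm v)\<^sup>2" for v :: "real^'d"
  proof -
    have "?A *v v = - v"
      by (simp add: vec_eq_iff matrix_vector_mult_def mat_def if_distrib[of "\<lambda>x. x * _"] cong: if_cong)
    then show ?thesis
      by (simp add: power2_norm_eq_inner)
  qed
  moreover have "trace ?A = - real CARD('d)"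
    by (simp add: trace_def mat_def)
  ultimately show ?thesis
    unfolding Gfun_def neg_second_moment_def G'_def by simp
qed

lemma integral_norm_sq_ge:
  assumes P: "P \<in> \<P>"
  shows "real n * (sl\<^sup>2 * real CARD('d)) \<le> integral\<^sup>L P (\<lambda>w. (norm (w (real n)))\<^sup>2)"
proof -
  have "neg_second_moment (real n) = real n * neg_second_moment 1"
  proof (induction n)
    case (Suc n)
    then show ?case
      using neg_second_moment_add[of "real n" 1] by (simp add: algebra_simps)
  qed (simp add: neg_second_moment_0)
  moreover have "integral\<^sup>L P (\<lambda>w. - (norm (w (real n)))\<^sup>2) \<le> neg_second_moment (real n)"
    unfolding neg_second_moment_def by (rule integral_le_upE[OF P, where c=0]) simp
  ultimately show ?thesis
    by (simp add: neg_second_moment_1)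
qed

section \<open>Hitting late\<close>

lemma integrable_grid_cutoff:
  assumes "P \<in> \<P>" "0 \<le> T"
  shows "integrable P (grid_cutoff x R T m)"
proof -
  interpret prob_space P
    by (rule prob_space_family[OF assms(1)])
  have "(\<lambda>w. ball_cutoff R (x + w (real (Suc k) * T))) \<in> borel_measurable P" for k
  proof -
    have "(\<lambda>w. w (real (Suc k) * T)) \<in> borel_measurable P"
      using coordinate_measurable[OF assms(1)] assms(2) by simp
    then show ?thesis
      by measurable
  qed
  then have "grid_cutoff x R T m \<in> borel_measurable P"
    unfolding grid_cutoff_def[abs_def] by measurable
  then show ?thesis
    by (intro integrable_const_bound[where B=1]) (auto simp: grid_cutoff_nonneg grid_cutoff_le_1)
qed

lemma upE_ball_cutoff_increment_le:
  assumes t: "0 \<le> t" and T: "0 \<le> T"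
    and step: "\<And>P c. P \<in> \<P> \<Longrightarrow> integral\<^sup>L P (\<lambda>w. ball_cutoff R (c + w T)) \<le> q"
  shows "upE \<P> (\<lambda>w. ball_cutoff R (c + (w (t + T) - w t))) \<le> q"
proof -
  have "upE \<P> (\<lambda>w. ball_cutoff R (c + (w (t + T) - w t))) = upE \<P> (\<lambda>w. ball_cutoff R (c + w T))"
    by (rule upE_increment_stationary[OF t T lip_poly1_ball_cutoff])
  also have "\<dots> \<le> q"
    by (rule upE_least[OF family_nonempty step])
  finally show ?thesis .
qed

lemma upE_cyl_cutoff_le:
  assumes T: "0 \<le> T"
    and step: "\<And>P c. P \<in> \<P> \<Longrightarrow> integral\<^sup>L P (\<lambda>w. ball_cutoff R (c + w T)) \<le> q"
  shows "upE \<P> (\<lambda>w'. cyl_cutoff x R m (cyl (Suc m) (\<lambda>i. real i * T) w)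
      (w' (real m * T + T) - w' (real m * T))) \<le> q * grid_cutoff x R T m w"
proof (rule upE_least[OF family_nonempty])
  fix Q assume Q: "Q \<in> \<P>"
  define t where "t = real m * T"
  have t: "0 \<le> t"
    unfolding t_def using T by simp
  have "integral\<^sup>L Q (\<lambda>w'. cyl_cutoff x R m (cyl (Suc m) (\<lambda>i. real i * T) w) (w' (t + T) - w' t))
      = grid_cutoff x R T m w * integral\<^sup>L Q (\<lambda>w'. ball_cutoff R ((x + w t) + (w' (t + T) - w' t)))"
    by (simp add: cyl_cutoff_grid t_def add.assoc)
  also have "\<dots> \<le> grid_cutoff x R T m w * q"
    using order.trans[OF integral_le_upE_of_le_1[OF Q ball_cutoff_le_1]
        upE_ball_cutoff_increment_le[OF t T step]]
    by (rule mult_left_mono[OF _ grid_cutoff_nonneg])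
  finally show "integral\<^sup>L Q (\<lambda>w'. cyl_cutoff x R m (cyl (Suc m) (\<lambda>i. real i * T) w)
      (w' (real m * T + T) - w' (real m * T))) \<le> q * grid_cutoff x R T m w"
    by (simp add: t_def mult.commute)
qed

lemma integral_grid_cutoff_le_power:
  assumes T: "0 \<le> T" and q: "0 \<le> q"
    and step: "\<And>P c. P \<in> \<P> \<Longrightarrow> integral\<^sup>L P (\<lambda>w. ball_cutoff R (c + w T)) \<le> q"
    and P: "P \<in> \<P>"
  shows "integral\<^sup>L P (grid_cutoff x R T m) \<le> q ^ m"
  using P
proof (induction m arbitrary: P)
  case 0
  then show ?case
    using prob_space.prob_space[OF prob_space_family] by (simp add: grid_cutoff_def)
next
  case (Suc m)
  let ?inner = "\<lambda>w. upE \<P> (\<lambda>w'. cyl_cutoff x R m (cyl (Suc m) (\<lambda>i. real i * T) w)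
      (w' (real m * T + T) - w' (real m * T)))"
  have "integral\<^sup>L P (grid_cutoff x R T (Suc m)) \<le> upE \<P> (grid_cutoff x R T (Suc m))"
    by (rule integral_le_upE_of_le_1[OF Suc.prems grid_cutoff_le_1])
  also have "\<dots> = upE \<P> ?inner"
    unfolding grid_cutoff_Suc_eq_cyl_cutoff
    using T by (intro upE_increment_independent lip_poly_cyl_cutoff) (auto intro: mult_right_mono)
  also have "\<dots> \<le> q ^ Suc m"
  proof (rule upE_least[OF family_nonempty])
    fix Q assume Q: "Q \<in> \<P>"
    have "integral\<^sup>L Q ?inner \<le> integral\<^sup>L Q (\<lambda>w. q * grid_cutoff x R T m w)"
      using upE_cyl_cutoff_le[OF T step] integrable_grid_cutoff[OF Q T] q
      by (intro integral_mono') (auto simp: grid_cutoff_nonneg)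
    also have "\<dots> \<le> q * q ^ m"
      using Suc.IH[OF Q] q by (simp add: mult_left_mono)
    finally show "integral\<^sup>L Q ?inner \<le> q ^ Suc m"
      by simp
  qed
  finally show ?case .
qed

lemma exists_uniform_ball_cutoff_bound:
  obtains T q where "0 \<le> T" "0 \<le> q" "q < 1"
    "\<And>P c. P \<in> \<P> \<Longrightarrow> integral\<^sup>L P (\<lambda>w. ball_cutoff R (c + w T)) \<le> q"
proof -
  define \<sigma> where "\<sigma> = sl\<^sup>2 * real CARD('d)"
  define N where "N = nat \<lceil>2 * R\<^sup>2 / \<sigma>\<rceil> + 1"
  define V where "V = real N * \<sigma>"
  have \<sigma>: "0 < \<sigma>"
    unfolding \<sigma>_def using lower_volatility_pos by simp
  have "0 < real N" "2 * R\<^sup>2 / \<sigma> \<le> real N"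
    unfolding N_def by linarith+
  then have V: "0 < V" "2 * R\<^sup>2 \<le> V"
    unfolding V_def using \<sigma> by (auto simp: divide_le_eq)
  obtain M4 where M4: "0 \<le> M4" "\<And>P. P \<in> \<P> \<Longrightarrow> integral\<^sup>L P (\<lambda>w. norm (w (real N)) ^ 4) \<le> M4"
    using moment_bounded[of "real N" 4] by auto
  define q where "q = 1 - V\<^sup>2 / (32 * (M4 + V + 1)\<^sup>2)"
  show ?thesis
  proof (rule that[of "real N" q])
    have "V\<^sup>2 \<le> (M4 + V + 1)\<^sup>2" and pos: "0 < (M4 + V + 1)\<^sup>2"
      using V M4 by (auto intro: power_mono)
    then have "V\<^sup>2 \<le> 32 * (M4 + V + 1)\<^sup>2"
      by linarith
    then have "V\<^sup>2 / (32 * (M4 + V + 1)\<^sup>2) \<le> 1" and "0 < V\<^sup>2 / (32 * (M4 + V + 1)\<^sup>2)"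
      using V pos by (auto simp: divide_le_eq)
    then show "0 \<le> q" "q < 1"
      unfolding q_def by auto
  next
    fix P c assume P: "P \<in> \<P>"
    interpret prob_space P
      by (rule prob_space_family[OF P])
    show "integral\<^sup>L P (\<lambda>w. ball_cutoff R (c + w (real N))) \<le> q"
      unfolding q_def
    proof (rule expectation_ball_cutoff_le)
      show "V \<le> expectation (\<lambda>w. (norm (w (real N)))\<^sup>2)"
        unfolding V_def \<sigma>_def by (rule integral_norm_sq_ge[OF P])
    qed (use coordinate_measurable[OF P] integrable_norm_power[OF P] integrable_inner[OF P]
        integral_inner_eq_0[OF P] V M4(1) M4(2)[OF P] in auto)
  qed simp
qed

lemma cap_hit_time_gt_le_power:
  assumes T: "0 \<le> T" and q: "0 \<le> q" and mt: "real m * T \<le> t"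
    and step: "\<And>P c. P \<in> \<P> \<Longrightarrow> integral\<^sup>L P (\<lambda>w. ball_cutoff (sqrt b + 1) (c + w T)) \<le> q"
  shows "cap \<P> {w \<in> Omega. hit_time x b w > ereal t} \<le> q ^ m"
proof (rule cap_least)
  fix P assume P: "P \<in> \<P>"
  have "measure P {w \<in> Omega. hit_time x b w > ereal t} \<le> integral\<^sup>L P (grid_cutoff x (sqrt b + 1) T m)"
    using integrable_grid_cutoff[OF P T] space_family[OF P]
    by (intro measure_le_integral_of_ge_1)
      (auto simp: grid_cutoff_nonneg grid_cutoff_eq_1_before_hit_time[OF T mt])
  also have "\<dots> \<le> q ^ m"
    by (rule integral_grid_cutoff_le_power[OF T q step P])
  finally show "measure P {w \<in> Omega. hit_time x b w > ereal t} \<le> q ^ m" .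
qed

lemma cap_hit_time_gt_tendsto_0:
  "((\<lambda>t. cap \<P> {w \<in> Omega. hit_time x b w > ereal t}) \<longlongrightarrow> 0) at_top"
proof (rule tendstoI)
  fix e :: real assume e: "0 < e"
  obtain T q where T: "0 \<le> T" and q: "0 \<le> q" "q < 1"
    and step: "\<And>P c. P \<in> \<P> \<Longrightarrow> integral\<^sup>L P (\<lambda>w. ball_cutoff (sqrt b + 1) (c + w T)) \<le> q"
    using exists_uniform_ball_cutoff_bound by blast
  have "\<forall>\<^sub>F n in sequentially. q ^ n < e"
    using LIMSEQ_power_zero[of q] q e by (intro order_tendstoD) auto
  then obtain m where m: "q ^ m < e"
    by (auto simp: eventually_sequentially)
  show "\<forall>\<^sub>F t in at_top. dist (cap \<P> {w \<in> Omega. hit_time x b w > ereal t}) 0 < e"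
    unfolding eventually_at_top_linorder dist_real_def
    using cap_hit_time_gt_le_power[OF T q(1) _ step] cap_nonneg m
    by (intro exI[of _ "real m * T"]) (auto intro: le_less_trans)
qed

section \<open>Hitting early\<close>

lemma integrable_sup_cutoff:
  assumes P: "P \<in> \<P>" and t: "0 \<le> t"
  shows "integrable P (sup_cutoff t L)"
proof -
  interpret prob_space P
    by (rule prob_space_family[OF P])
  have "path_sup t \<in> borel_measurable P"
    unfolding path_sup_def[abs_def]
  proof (rule borel_measurable_cSUP)
    show "countable (\<rat> \<inter> {0..t})"
      using countable_rat by (rule countable_Int1)
    show "(\<lambda>w. norm (w s)) \<in> borel_measurable P" if "s \<in> \<rat> \<inter> {0..t}" for s
      using coordinate_measurable[OF P] that by auto
    show "bdd_above ((\<lambda>s. norm (w s)) ` (\<rat> \<inter> {0..t}))" if "w \<in> space P" for w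
      using that space_family[OF P] by (intro bdd_above_norm_path[of _ _ t]) auto
  qed
  then show ?thesis
    unfolding sup_cutoff_def[abs_def]
    by (intro integrable_const_bound[where B=1]) auto
qed

lemma integral_sup_cutoff_tendsto_0:
  assumes P: "P \<in> \<P>" and t: "0 \<le> t"
  shows "(\<lambda>L::nat. integral\<^sup>L P (sup_cutoff t (real L))) \<longlonglongrightarrow> 0"
proof -
  interpret prob_space P
    by (rule prob_space_family[OF P])
  have "(\<lambda>L::nat. integral\<^sup>L P (sup_cutoff t (real L))) \<longlonglongrightarrow> integral\<^sup>L P (\<lambda>w. 0)"
  proof (rule integral_dominated_convergence[where w="\<lambda>w. 1"])
    show "AE w in P. (\<lambda>L. sup_cutoff t (real L) w) \<longlonglongrightarrow> 0"
    proof (intro AE_I2 tendsto_eventually)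
      fix w :: "real \<Rightarrow> real^'d"
      obtain N where "path_sup t w \<le> real N"
        using real_arch_simple by blast
      then show "\<forall>\<^sub>F L in sequentially. sup_cutoff t (real L) w = 0"
        unfolding eventually_sequentially sup_cutoff_def by (intro exI[of _ N]) auto
    qed
  qed (use integrable_sup_cutoff[OF P t] in \<open>auto simp: sup_cutoff_nonneg sup_cutoff_le_1\<close>)
  then show ?thesis
    by simp
qed

lemma measure_hit_time_less_le_integral_sup_cutoff:
  assumes P: "P \<in> \<P>" and t: "0 \<le> t" and level: "(L + 1 + norm x)\<^sup>2 \<le> b"
  shows "measure P {w \<in> Omega. hit_time x b w < ereal t} \<le> integral\<^sup>L P (sup_cutoff t L)"
proof (rule measure_le_integral_of_ge_1)
  fix w assume "w \<in> {w \<in> Omega. hit_time x b w < ereal t}"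
  then have "L + 1 \<le> path_sup t w"
    using level by (auto intro: hit_time_less_imp_path_sup_ge)
  then show "1 \<le> sup_cutoff t L w"
    unfolding sup_cutoff_def by simp
qed (use integrable_sup_cutoff[OF P t] space_family[OF P] in \<open>auto simp: sup_cutoff_nonneg\<close>)

lemma integral_sup_cutoff_ge_weak_limit:
  assumes t: "0 \<le> t" and r: "strict_mono r" and conv: "weak_conv_paths (Ps \<circ> r) P"
    and Ps: "\<And>n. Ps n \<in> \<P>" and levels: "\<And>n. real n \<le> bs n"
    and large: "\<And>n. c \<le> measure (Ps n) {w \<in> Omega. hit_time x (bs n) w < ereal t}"
  shows "c \<le> integral\<^sup>L P (sup_cutoff t L)"
proof (rule LIMSEQ_le_const)
  show "(\<lambda>n. integral\<^sup>L (Ps (r n)) (sup_cutoff t L)) \<longlonglongrightarrow> integral\<^sup>L P (sup_cutoff t L)"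
    using conv bcont_fun_sup_cutoff[OF t] unfolding weak_conv_paths_def by auto
  obtain N :: nat where N: "(L + 1 + norm x)\<^sup>2 \<le> real N"
    using real_arch_simple by blast
  have "c \<le> integral\<^sup>L (Ps (r n)) (sup_cutoff t L)" if "N \<le> n" for n
  proof -
    have "real n \<le> real (r n)"
      using seq_suble[OF r, of n] by simp
    then have "(L + 1 + norm x)\<^sup>2 \<le> bs (r n)"
      using N that levels[of "r n"] by linarith
    then show ?thesis
      using measure_hit_time_less_le_integral_sup_cutoff[OF Ps t] large[of "r n"] by (meson order.trans)
  qed
  then show "\<exists>N. \<forall>n\<ge>N. c \<le> integral\<^sup>L (Ps (r n)) (sup_cutoff t L)"
    by blast
qed

lemma cap_hit_time_lt_tendsto_0:
  assumes t: "0 \<le> t"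
  shows "((\<lambda>b. cap \<P> {w \<in> Omega. hit_time x b w < ereal t}) \<longlongrightarrow> 0) at_top"
proof (rule ccontr)
  define A where "A b = {w \<in> Omega. hit_time x b w < ereal t}" for b
  assume "\<not> ?thesis"
  then obtain e :: real where e: "0 < e" and not_small: "\<not> (\<forall>\<^sub>F b in at_top. dist (cap \<P> (A b)) 0 < e)"
    unfolding tendsto_iff A_def by blast
  have "\<exists>b\<ge>real n. e / 2 < cap \<P> (A b)" for n :: nat
    using not_small cap_nonneg e unfolding eventually_at_top_linorder
    by (force simp: dist_real_def not_less)
  then obtain bs where bs: "\<And>n. real n \<le> bs n" "\<And>n. e / 2 < cap \<P> (A (bs n))"
    by metis
  have "\<exists>P\<in>\<P>. e / 2 < measure P (A (bs n))" for n
    by (rule less_cap_imp_measure[OF bs(2)]) blast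
  then obtain Ps where Ps: "\<And>n. Ps n \<in> \<P>" "\<And>n. e / 2 < measure (Ps n) (A (bs n))"
    by metis
  obtain r P where r: "strict_mono r" and P: "P \<in> \<P>" and conv: "weak_conv_paths (Ps \<circ> r) P"
    using framework Ps(1) unfolding G_framework_def weakly_compact_def by metis
  have "e / 2 \<le> integral\<^sup>L P (sup_cutoff t (real L))" for L :: nat
    using Ps(2) unfolding A_def
    by (intro integral_sup_cutoff_ge_weak_limit[OF t r conv Ps(1) bs(1)] less_imp_le)
  then have "e / 2 \<le> 0"
    by (intro LIMSEQ_le_const[OF integral_sup_cutoff_tendsto_0[OF P t]]) auto
  with e show False
    by simp
qed

end

theorem lemma3p8:
  fixes \<P> :: "(real \<Rightarrow> real^'d) measure set" and sl sh :: real and x :: "real^'d"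
  assumes "G_framework \<P> sl sh"
    and "(norm x)\<^sup>2 > 0"
  shows "(\<forall>b > (norm x)\<^sup>2.
            ((\<lambda>t. cap \<P> {w \<in> Omega. hit_time x b w > ereal t}) \<longlongrightarrow> 0) at_top) \<and>
         (\<forall>t \<ge> 0.
            ((\<lambda>b. cap \<P> {w \<in> Omega. hit_time x b w < ereal t}) \<longlongrightarrow> 0) at_top)"
proof -
  interpret G_BM_space \<P> sl sh
    by unfold_locales (rule assms(1))
  show ?thesis
    using cap_hit_time_gt_tendsto_0 cap_hit_time_lt_tendsto_0 by blast
qed

end
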